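(* Let $\mathbf{r}_1,\mathbf{r}_2,\mathbf{s}_1,\mathbf{s}_2\in\mathbb{R}^2$ satisfy the nondegeneracy conditions $\mathbf{r}_1\cdot\mathbf{r}_2^{\perp}\neq 0$ and $\mathbf{s}_1\cdot\mathbf{s}_2^{\perp}\neq 0$. Suppose there exist $\lambda\in\mathbb{R}\setminus\{0\}$ and $(p_a^\star,q_a^\star),(p_b^\star,q_b^\star)\in\mathbb{Z}^2\setminus\{\mathbf{0}\}$ with $(p_a^\star,q_a^\star)\neq(p_b^\star,q_b^\star)$ such that $$p_a^\star\mathbf{r}_1+q_a^\star\mathbf{r}_2=(\lambda,0),\qquad p_b^\star\mathbf{s}_1+q_b^\star\mathbf{s}_2=(\lambda,0).$$ Let $(\hat{\mathbf{r}}_1,\hat{\mathbf{r}}_2)$ and $(\hat{\mathbf{s}}_1,\hat{\mathbf{s}}_2)$ be the reciprocal vectors of $(\mathbf{r}_1,\mathbf{r}_2)$ and $(\mathbf{s}_1,\mathbf{s}_2)$, respectively, and set $\hat{\mathbf{t}}_1=\hat{\mathbf{s}}_1-\hat{\mathbf{r}}_1$, $\hat{\mathbf{t}}_2=\hat{\mathbf{s}}_2-\hat{\mathbf{r}}_2$. Assume $\hat{\mathbf{t}}_1\cdot\hat{\mathbf{t}}_2^{\perp}\neq 0$, and let $(\mathbf{t}_1,\mathbf{t}_2)$ be the reciprocal vectors of $(\hat{\mathbf{t}}_1,\hat{\mathbf{t}}_2)$. Then $$(p_b^\star-p_a^\star)\,\mathbf{t}_1+(q_b^\star-q_a^\star)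\,\mathbf{t}_2=(\lambda,0).$$
   Context: For $\mathbf{u}=(u_1,u_2)\in\mathbb{R}^2$, $\mathbf{u}^\perp$ denotes its rotation by $90^\circ$, e.g. $\mathbf{u}^\perp=(-u_2,u_1)$, so $\mathbf{u}_1\cdot\mathbf{u}_2^\perp\neq 0$ means $\mathbf{u}_1,\mathbf{u}_2$ are linearly independent. For a linearly independent pair $(\mathbf{u}_1,\mathbf{u}_2)$ in $\mathbb{R}^2$, its reciprocal vectors are the unique pair $(\hat{\mathbf{u}}_1,\hat{\mathbf{u}}_2)$ in $\mathbb{R}^2$ with $\mathbf{u}_i\cdot\hat{\mathbf{u}}_j=\delta_{ij}$ for $i,j\in\{1,2\}$ (no factor $2\pi$). *)

theory Defs
  imports "HOL-Analysis.Analysis"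
begin

definition perp :: "real \<times> real \<Rightarrow> real \<times> real" where
  "perp u = (- snd u, fst u)"

text \<open>(v1, v2) are the reciprocal vectors of (u1, u2): u_i \<bullet> v_j = delta_ij (no factor 2 pi).\<close>
definition reciprocal :: "real \<times> real \<Rightarrow> real \<times> real \<Rightarrow> real \<times> real \<Rightarrow> real \<times> real \<Rightarrow> bool" where
  "reciprocal u1 u2 v1 v2 \<longleftrightarrow>
     u1 \<bullet> v1 = 1 \<and> u1 \<bullet> v2 = 0 \<and> u2 \<bullet> v1 = 0 \<and> u2 \<bullet> v2 = 1"

end

theory Submission
  imports Defs
begin

text \<open>Write \<open>th\<^sub>i = sh\<^sub>i - rh\<^sub>i\<close> and \<open>v = (lam, 0)\<close>. Pairing the two integer
  expansions of \<open>v\<close> with the reciprocal vectors gives \<open>v \<bullet> rh\<^sub>i\<close> and \<open>v \<bullet> sh\<^sub>i\<close> as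
  their coefficients, so \<open>v \<bullet> th\<^sub>1 = pb - pa\<close> and \<open>v \<bullet> th\<^sub>2 = qb - qa\<close>. Since
  \<open>(t\<^sub>1, t\<^sub>2)\<close> is reciprocal to the basis \<open>(th\<^sub>1, th\<^sub>2)\<close>, these pairings are the
  coordinates of \<open>v\<close> in the basis \<open>(t\<^sub>1, t\<^sub>2)\<close>.\<close>

lemma orthogonal_to_independent_pair_eq_0:
  fixes u1 u2 w :: "real \<times> real"
  assumes "u1 \<bullet> perp u2 \<noteq> 0" and "u1 \<bullet> w = 0" and "u2 \<bullet> w = 0"
  shows "w = 0"
proof -
  obtain a b c d x y where uw: "u1 = (a, b)" "u2 = (c, d)" "w = (x, y)"
    by (metis prod.collapse)
  have det: "a * d - b * c \<noteq> 0" and eqs: "a * x + b * y = 0" "c * x + d * y = 0"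
    using assms by (auto simp: uw perp_def inner_prod_def algebra_simps)
  have "x * (a * d - b * c) = d * (a * x + b * y) - b * (c * x + d * y)"
    and "y * (a * d - b * c) = a * (c * x + d * y) - c * (a * x + b * y)"
    by (simp_all add: algebra_simps)
  with eqs have "x * (a * d - b * c) = 0" and "y * (a * d - b * c) = 0"
    by simp_all
  with det show ?thesis
    by (simp add: uw zero_prod_def)
qed

lemma reciprocal_inner_combination:
  assumes "reciprocal u1 u2 v1 v2"
  shows "(a *\<^sub>R u1 + b *\<^sub>R u2) \<bullet> v1 = a" and "(a *\<^sub>R u1 + b *\<^sub>R u2) \<bullet> v2 = b"
  using assms by (simp_all add: reciprocal_def inner_add_left)

lemma reciprocal_expansion:
  assumes "u1 \<bullet> perp u2 \<noteq> 0" and "reciprocal u1 u2 v1 v2"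
  shows "w = (u1 \<bullet> w) *\<^sub>R v1 + (u2 \<bullet> w) *\<^sub>R v2"
proof -
  let ?d = "w - ((u1 \<bullet> w) *\<^sub>R v1 + (u2 \<bullet> w) *\<^sub>R v2)"
  have "u1 \<bullet> ?d = 0" and "u2 \<bullet> ?d = 0"
    using assms(2) by (simp_all add: reciprocal_def inner_diff_right inner_add_right)
  with assms(1) have "?d = 0"
    by (rule orthogonal_to_independent_pair_eq_0)
  then show ?thesis
    by simp
qed

theorem theorem2:
  fixes r1 r2 s1 s2 rh1 rh2 sh1 sh2 t1 t2 :: "real \<times> real"
    and lam :: real and pa qa pb qb :: int
  assumes "r1 \<bullet> perp r2 \<noteq> 0" and "s1 \<bullet> perp s2 \<noteq> 0"
    and "lam \<noteq> 0"
    and "(pa, qa) \<noteq> (0, 0)" and "(pb, qb) \<noteq> (0, 0)" and "(pa, qa) \<noteq> (pb, qb)"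
    and "of_int pa *\<^sub>R r1 + of_int qa *\<^sub>R r2 = (lam, 0)"
    and "of_int pb *\<^sub>R s1 + of_int qb *\<^sub>R s2 = (lam, 0)"
    and "reciprocal r1 r2 rh1 rh2" and "reciprocal s1 s2 sh1 sh2"
    and "(sh1 - rh1) \<bullet> perp (sh2 - rh2) \<noteq> 0"
    and "reciprocal (sh1 - rh1) (sh2 - rh2) t1 t2"
  shows "of_int (pb - pa) *\<^sub>R t1 + of_int (qb - qa) *\<^sub>R t2 = (lam, 0)"
proof -
  define v where "v = (lam, 0::real)"
  have "v \<bullet> rh1 = pa" "v \<bullet> rh2 = qa"
    using reciprocal_inner_combination[OF assms(9)] by (simp_all add: v_def flip: assms(7))
  moreover have "v \<bullet> sh1 = pb" "v \<bullet> sh2 = qb"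
    using reciprocal_inner_combination[OF assms(10)] by (simp_all add: v_def flip: assms(8))
  ultimately have "(sh1 - rh1) \<bullet> v = of_int (pb - pa)" "(sh2 - rh2) \<bullet> v = of_int (qb - qa)"
    by (simp_all add: inner_diff_left inner_commute[of v])
  with reciprocal_expansion[OF assms(11,12), of v] show ?thesis
    by (simp add: v_def)
qed

end
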